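(* There is an absolute constant $C>0$ such that the following holds. Let $d$ and $n$ be integers with $1\le d\le n$, let $E$ be a nonempty family of subsets of $[n]$ each of size at most $d$, and let $p$ be an integer with $1\le p\le \min\{|e'\setminus e| : e,e'\in E,\ e\neq e'\}$. Then there exists a non-adaptive group testing algorithm that finds the defective hyperedge in $E$ and uses at most $C\,\frac{d}{p}\log|E|$ tests; that is, there are pools $T_1,\dots,T_t\subseteq[n]$ with $t\le C\frac dp\log|E|$ such that $r(e)\neq r(e')$ for all distinct $e,e'\in E$.
   Context: Group testing on a hypergraph: the items are $[n]=\{1,\dots,n\}$, $E$ is a family of subsets of $[n]$ (hyperedges), and exactly one hyperedge $e^*\in E$ is defective (unknown). A test on a pool $T\subseteq[n]$ is positive iff $T\cap e^*\neq\emptyset$. A non-adaptive algorithm with $t$ tests is a sequence of pools $T_1,\dots,T_t\subseteq[n]$ fixed in advance; for $f\in E$ its response vector is $r(f)\in\{0,1\}^t$ with $i$-th entry $1$ iff $T_i\cap f\neq\emptyset$. The algorithm finds the defective hyperedge iff distinct hyperedges have distinct response vectors. Logarithms are to a fixed base. *)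

theory Defs
  imports Complex_Main
begin

text \<open>A non-adaptive algorithm is a list of pools T_1..T_t. The response vector of
  a hyperedge f: the i-th entry is True iff T_i meets f.\<close>
definition response :: "nat set list \<Rightarrow> nat set \<Rightarrow> bool list" where
  "response Ts f = map (\<lambda>T. T \<inter> f \<noteq> {}) Ts"

end

theory Submission
  imports Defs
begin

text \<open>Draw a pool at random, putting each item in it independently with probability
  \<open>q = 1/(2d)\<close>. For distinct hyperedges \<open>e, e'\<close> the pool misses \<open>e\<close> and meets \<open>e' - e\<close>
  with probability \<open>(1-q)^|e| (1 - (1-q)^|e'-e|) \<ge> p/(8d)\<close>, and then the responses to \<open>e\<close>
  and \<open>e'\<close> differ. Averaging, some pool separates a \<open>p/(8d)\<close> fraction of the ordered pairs
  not yet separated; choosing pools greedily, fewer than \<open>(1 - p/(8d))^t |E|^2\<close> pairs remain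
  after \<open>t\<close> pools, and this is at most \<open>1\<close> once \<open>t \<approx> 16 (d/p) ln |E|\<close>.\<close>

section \<open>Elementary estimates\<close>

lemma one_minus_power_mul_le_one:
  fixes x :: real
  assumes "0 \<le> x" "x \<le> 1"
  shows "(1 - x) ^ m * (1 + real m * x) \<le> 1"
proof -
  have "(1 - x) ^ m * (1 + real m * x) \<le> (1 - x) ^ m * (1 + x) ^ m"
    using assms Bernoulli_inequality[of x m] by (intro mult_left_mono) auto
  also have "\<dots> = (1 - x ^ 2) ^ m"
    by (simp add: power_mult_distrib[symmetric] power2_eq_square algebra_simps)
  also have "\<dots> \<le> 1"
    using assms by (intro power_le_one) (auto simp: power2_eq_square mult_le_one)
  finally show ?thesis .
qed

lemma one_minus_power_ge:
  fixes x :: real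
  assumes "0 \<le> x" "x \<le> 1" "real m * x \<le> 1"
  shows "real m * x / 2 \<le> 1 - (1 - x) ^ m"
proof -
  let ?y = "real m * x"
  have "(1 - x) ^ m * (1 + ?y) \<le> 1"
    using assms(1,2) by (rule one_minus_power_mul_le_one)
  moreover have "?y / 2 * (1 + ?y) \<le> ?y"
    using assms mult_left_mono[of ?y 1 ?y] by (simp add: algebra_simps)
  ultimately have "((1 - x) ^ m + ?y / 2) * (1 + ?y) \<le> 1 + ?y"
    by (simp add: distrib_right)
  moreover have "0 < 1 + ?y"
    using assms by (simp add: add_pos_nonneg)
  ultimately have "(1 - x) ^ m + ?y / 2 \<le> 1"
    by (metis mult_le_cancel_right_pos mult_1)
  then show ?thesis
    by simp
qed

lemma one_minus_power_diff_ge: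
  fixes q :: real
  assumes "0 \<le> q" "q \<le> 1" "real a * q \<le> 1/2" "real p * q \<le> 1" "p \<le> k"
  shows "real p * q / 4 \<le> (1 - q) ^ a - (1 - q) ^ (a + k)"
proof -
  have "1/2 \<le> (1 - q) ^ a"
    using assms(1-3) Bernoulli_inequality[of "- q" a] by simp
  moreover have "real p * q / 2 \<le> 1 - (1 - q) ^ k"
  proof -
    have "real p * q / 2 \<le> 1 - (1 - q) ^ p"
      using assms by (intro one_minus_power_ge)
    also have "\<dots> \<le> 1 - (1 - q) ^ k"
      using assms by (simp add: power_decreasing)
    finally show ?thesis .
  qed
  ultimately have "1/2 * (real p * q / 2) \<le> (1 - q) ^ a * (1 - (1 - q) ^ k)"
    using assms by (intro mult_mono) auto
  then show ?thesis
    by (simp add: power_add algebra_simps)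
qed

lemma exists_power_mul_square_le_one:
  fixes c N :: real
  assumes "0 < c" "c \<le> 1" "1 \<le> N"
  shows "\<exists>t::nat. (1 - c) ^ t * N ^ 2 \<le> 1 \<and> real t \<le> 2 * ln N / c + 1"
proof (intro exI conjI)
  define t where "t = nat \<lceil>2 * ln N / c\<rceil>"
  have "2 * ln N / c \<le> real t"
    unfolding t_def by (rule real_nat_ceiling_ge)
  then have "2 * ln N \<le> c * real t"
    using assms(1) by (simp add: pos_divide_le_eq mult.commute)
  have "(1 - c) ^ t \<le> exp (- c) ^ t"
    using assms(2) by (intro power_mono) (auto simp: exp_ge_add_one_self[of "- c", simplified])
  also have "\<dots> = exp (- (c * real t))"
    by (simp add: exp_of_nat_mult[symmetric] mult.commute)
  also have "\<dots> \<le> exp (- (2 * ln N))"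
    using \<open>2 * ln N \<le> c * real t\<close> by simp
  also have "\<dots> = 1 / N ^ 2"
    using exp_of_nat_mult[of 2 "ln N"] assms(3) by (simp add: exp_minus divide_inverse)
  finally show "(1 - c) ^ t * N ^ 2 \<le> 1"
    using assms(3) by (simp add: field_simps)
  have "0 \<le> 2 * ln N / c"
    using assms by simp
  then show "real t \<le> 2 * ln N / c + 1"
    unfolding t_def by linarith
qed

lemma exists_test_count:
  fixes d p :: nat and N :: real
  assumes "1 \<le> p" "p \<le> d" "2 \<le> N"
  shows "\<exists>t::nat. (1 - real p / (8 * real d)) ^ t * N ^ 2 \<le> 1 \<and>
    real t \<le> 17 * (real d / real p) * log 2 N"
proof -
  define c where "c = real p / (8 * real d)"
  have "0 < c" "c \<le> 1"
    using assms(1,2) by (auto simp: c_def field_simps)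
  then obtain t where t: "(1 - c) ^ t * N ^ 2 \<le> 1" "real t \<le> 2 * ln N / c + 1"
    using exists_power_mul_square_le_one[of c N] assms(3) by auto
  have ratio: "1 \<le> real d / real p" and "1 \<le> log 2 N" "ln N \<le> log 2 N"
    using assms ln_2_less_1 by (auto simp: log_def field_simps)
  then have "1 * 1 \<le> (real d / real p) * log 2 N"
    by (intro mult_mono) auto
  moreover have "2 * ln N / c = 16 * (real d / real p) * ln N"
    using assms(1) by (simp add: c_def field_simps)
  moreover have "16 * (real d / real p) * ln N \<le> 16 * (real d / real p) * log 2 N"
    using ratio \<open>ln N \<le> log 2 N\<close> by (intro mult_left_mono) auto
  ultimately have "real t \<le> 17 * (real d / real p) * log 2 N"
    using t(2) by linarith
  with t(1) show ?thesis
    unfolding c_def by blast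
qed

lemma finite_off_diagonal: "finite A \<Longrightarrow> finite {(x, y). x \<in> A \<and> y \<in> A \<and> x \<noteq> y}"
  by (rule finite_subset[of _ "A \<times> A"]) auto

lemma card_off_diagonal_less:
  assumes "finite A" "A \<noteq> {}"
  shows "card {(x, y). x \<in> A \<and> y \<in> A \<and> x \<noteq> y} < card A ^ 2"
proof -
  obtain a where "a \<in> A"
    using assms(2) by blast
  then have "{(x, y). x \<in> A \<and> y \<in> A \<and> x \<noteq> y} \<subset> A \<times> A"
    by auto
  then have "card {(x, y). x \<in> A \<and> y \<in> A \<and> x \<noteq> y} < card (A \<times> A)"
    using assms(1) by (intro psubset_card_mono) auto
  then show ?thesis
    by (simp add: card_cartesian_product power2_eq_square)
qed

section \<open>Random pools\<close>

text \<open>The probability that the random pool drawn from \<open>S\<close> with item probability \<open>q\<close> is \<open>T\<close>.\<close>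

definition pool_weight :: "'a set \<Rightarrow> real \<Rightarrow> 'a set \<Rightarrow> real" where
  "pool_weight S q T = q ^ card T * (1 - q) ^ card (S - T)"

lemma pool_weight_nonneg: "0 \<le> q \<Longrightarrow> q \<le> 1 \<Longrightarrow> 0 \<le> pool_weight S q T"
  by (simp add: pool_weight_def)

lemma sum_pool_weight:
  assumes "finite S"
  shows "(\<Sum>T\<in>Pow S. pool_weight S q T) = 1"
proof -
  have "(\<Sum>T\<in>Pow S. pool_weight S q T) = (\<Sum>T\<in>Pow S. (\<Prod>x\<in>T. q) * (\<Prod>x\<in>S - T. 1 - q))"
    using assms by (intro sum.cong) (auto simp: pool_weight_def finite_subset)
  also have "\<dots> = (\<Prod>x\<in>S. q + (1 - q))"
    using assms by (rule prod_add[symmetric])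
  finally show ?thesis
    by simp
qed

lemma sum_pool_weight_avoiding:
  assumes "finite S" "A \<subseteq> S"
  shows "(\<Sum>T | T \<subseteq> S \<and> T \<inter> A = {}. pool_weight S q T) = (1 - q) ^ card A"
proof -
  have weight: "pool_weight S q T = pool_weight (S - A) q T * (1 - q) ^ card A"
    if "T \<subseteq> S - A" for T
  proof -
    have "S - T = (S - A - T) \<union> A" "(S - A - T) \<inter> A = {}"
      using assms(2) that by auto
    then have "card (S - T) = card (S - A - T) + card A"
      using assms finite_subset by (metis card_Un_disjoint finite_Diff)
    then show ?thesis
      by (simp add: pool_weight_def power_add)
  qed
  have "{T. T \<subseteq> S \<and> T \<inter> A = {}} = Pow (S - A)"
    by auto
  then have "(\<Sum>T | T \<subseteq> S \<and> T \<inter> A = {}. pool_weight S q T)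
      = (\<Sum>T\<in>Pow (S - A). pool_weight (S - A) q T) * (1 - q) ^ card A"
    by (simp add: weight sum_distrib_right)
  then show ?thesis
    using assms by (simp add: sum_pool_weight)
qed

fun separates :: "'a set \<Rightarrow> 'a set \<times> 'a set \<Rightarrow> bool" where
  "separates T (e, e') \<longleftrightarrow> T \<inter> e = {} \<and> T \<inter> e' \<noteq> {}"

lemma sum_pool_weight_separating:
  assumes "finite S" "e \<subseteq> S" "e' \<subseteq> S"
  shows "(\<Sum>T | T \<subseteq> S \<and> separates T (e, e'). pool_weight S q T)
    = (1 - q) ^ card e - (1 - q) ^ (card e + card (e' - e))"
proof -
  let ?avoid = "\<lambda>A. {T. T \<subseteq> S \<and> T \<inter> A = {}}"
  have "{T. T \<subseteq> S \<and> separates T (e, e')} = ?avoid e - ?avoid (e \<union> e')"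
    by auto
  moreover have "finite (?avoid e)" "?avoid (e \<union> e') \<subseteq> ?avoid e"
    using assms(1) by (auto intro: finite_subset[of _ "Pow S"])
  ultimately have "(\<Sum>T | T \<subseteq> S \<and> separates T (e, e'). pool_weight S q T)
      = (\<Sum>T\<in>?avoid e. pool_weight S q T) - (\<Sum>T\<in>?avoid (e \<union> e'). pool_weight S q T)"
    by (simp add: sum_diff)
  also have "\<dots> = (1 - q) ^ card e - (1 - q) ^ card (e \<union> e')"
    using assms by (simp add: sum_pool_weight_avoiding)
  also have "card (e \<union> e') = card e + card (e' - e)"
    using assms finite_subset by (metis Diff_disjoint Un_Diff_cancel card_Un_disjoint finite_Diff)
  finally show ?thesis .
qed

lemma exists_ge_weighted_average:
  fixes w :: "'t \<Rightarrow> real" and R :: "'t \<Rightarrow> 'x \<Rightarrow> bool"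
  assumes "finite A" "finite P" "\<And>T. T \<in> A \<Longrightarrow> 0 \<le> w T" "sum w A = 1"
    and "\<And>x. x \<in> P \<Longrightarrow> c \<le> (\<Sum>T | T \<in> A \<and> R T x. w T)"
  shows "\<exists>T\<in>A. c * card P \<le> card {x\<in>P. R T x}"
proof -
  define g where "g T = real (card {x\<in>P. R T x})" for T
  have "c * card P \<le> (\<Sum>x\<in>P. \<Sum>T | T \<in> A \<and> R T x. w T)"
    using sum_mono[of P "\<lambda>_. c"] assms(5) by (simp add: mult.commute)
  also have "\<dots> = (\<Sum>x\<in>P. \<Sum>T\<in>A. if R T x then w T else 0)"
    using assms(1) by (simp add: sum.inter_filter)
  also have "\<dots> = (\<Sum>T\<in>A. \<Sum>x\<in>P. if R T x then w T else 0)"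
    by (rule sum.swap)
  also have "\<dots> = (\<Sum>T\<in>A. w T * g T)"
    using assms(2) by (simp add: g_def mult.commute flip: sum.inter_filter)
  also have "\<dots> \<le> (\<Sum>T\<in>A. w T * Max (g ` A))"
    using assms(1,3) by (intro sum_mono mult_left_mono) auto
  also have "\<dots> = Max (g ` A)"
    using assms(4) by (simp flip: sum_distrib_right)
  finally have "c * card P \<le> Max (g ` A)" .
  moreover have "Max (g ` A) \<in> g ` A"
    using assms(1,4) by (intro Max_in) auto
  ultimately show ?thesis
    unfolding g_def by auto
qed

lemma exists_pool_separating_fraction:
  fixes S :: "'a set" and Q :: "('a set \<times> 'a set) set" and d p :: nat
  assumes "finite S" "finite Q" "1 \<le> d" "p \<le> d"
    and "\<And>e e'. (e, e') \<in> Q \<Longrightarrow> e \<subseteq> S \<and> e' \<subseteq> S \<and> card e \<le> d \<and> p \<le> card (e' - e)"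
  shows "\<exists>T\<in>Pow S. real p / (8 * real d) * card Q \<le> card {x\<in>Q. separates T x}"
proof (rule exists_ge_weighted_average)
  define q where "q = 1 / (2 * real d)"
  have q: "0 \<le> q" "q \<le> 1"
    using assms(3) by (auto simp: q_def)
  show "\<And>T. T \<in> Pow S \<Longrightarrow> 0 \<le> pool_weight S q T"
    using q by (rule pool_weight_nonneg)
  show "sum (pool_weight S q) (Pow S) = 1"
    using assms(1) by (rule sum_pool_weight)
  show "real p / (8 * real d) \<le> (\<Sum>T | T \<in> Pow S \<and> separates T x. pool_weight S q T)"
    if "x \<in> Q" for x
  proof -
    obtain e e' where x: "x = (e, e')"
      by (cases x)
    then have e: "e \<subseteq> S" "e' \<subseteq> S" "card e \<le> d" "p \<le> card (e' - e)"
      using that assms(5) by auto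
    have "real (card e) * q \<le> 1/2" "real p * q \<le> 1"
      using e(3) assms(3,4) by (auto simp: q_def field_simps)
    then have "real p * q / 4 \<le> (1 - q) ^ card e - (1 - q) ^ (card e + card (e' - e))"
      using q e(4) by (intro one_minus_power_diff_ge)
    then show ?thesis
      using sum_pool_weight_separating[OF assms(1) e(1,2), of q] by (simp add: x q_def)
  qed
qed (simp_all add: assms(1,2))

section \<open>Greedy separation\<close>

lemma greedy_cover:
  fixes R :: "'t \<Rightarrow> 'x \<Rightarrow> bool" and c :: real
  assumes "finite P" "c \<le> 1"
    and cover: "\<And>Q. Q \<subseteq> P \<Longrightarrow> \<exists>T\<in>A. c * card Q \<le> card {x\<in>Q. R T x}"
  shows "\<exists>Ts. length Ts = t \<and> set Ts \<subseteq> A \<and>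
    card {x\<in>P. \<forall>T\<in>set Ts. \<not> R T x} \<le> (1 - c) ^ t * card P"
proof (induction t)
  case 0
  show ?case
    using assms(1) by (intro exI[of _ "[]"]) simp
next
  case (Suc t)
  then obtain Ts where Ts: "length Ts = t" "set Ts \<subseteq> A"
    "card {x\<in>P. \<forall>T\<in>set Ts. \<not> R T x} \<le> (1 - c) ^ t * card P"
    by blast
  define U where "U = {x\<in>P. \<forall>T\<in>set Ts. \<not> R T x}"
  obtain T where T: "T \<in> A" "c * card U \<le> card {x\<in>U. R T x}"
    using cover[of U] by (auto simp: U_def)
  have "finite U"
    using assms(1) by (simp add: U_def)
  have "{x\<in>P. \<forall>T'\<in>set (T # Ts). \<not> R T' x} = U - {x\<in>U. R T x}"
    by (auto simp: U_def)
  then have "card {x\<in>P. \<forall>T'\<in>set (T # Ts). \<not> R T' x} = real (card U) - card {x\<in>U. R T x}"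
    using \<open>finite U\<close> by (simp add: card_Diff_subset card_mono of_nat_diff)
  also have "\<dots> \<le> (1 - c) * card U"
    using T(2) by (simp add: algebra_simps)
  also have "\<dots> \<le> (1 - c) * ((1 - c) ^ t * card P)"
    using Ts(3) assms(2) by (intro mult_left_mono) (auto simp: U_def)
  finally show ?case
    using Ts T(1) by (intro exI[of _ "T # Ts"]) auto
qed

lemma response_neq_if_separates:
  assumes "T \<in> set Ts" "separates T (e, e')"
  shows "response Ts e \<noteq> response Ts e'"
  using assms by (auto simp: response_def map_eq_conv)

lemma exists_separating_pools:
  fixes E :: "nat set set" and d p t :: nat
  assumes "finite S" "E \<noteq> {}" "1 \<le> d" "p \<le> d"
    and edges: "\<And>e. e \<in> E \<Longrightarrow> e \<subseteq> S \<and> card e \<le> d"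
    and distance: "\<And>e e'. e \<in> E \<Longrightarrow> e' \<in> E \<Longrightarrow> e \<noteq> e' \<Longrightarrow> p \<le> card (e' - e)"
    and t: "(1 - real p / (8 * real d)) ^ t * real (card E) ^ 2 \<le> 1"
  shows "\<exists>Ts. length Ts = t \<and> set Ts \<subseteq> Pow S \<and>
    (\<forall>e\<in>E. \<forall>e'\<in>E. e \<noteq> e' \<longrightarrow> response Ts e \<noteq> response Ts e')"
proof -
  define c where "c = real p / (8 * real d)"
  have "c < 1"
    using assms(3,4) by (auto simp: c_def field_simps)
  define P where "P = {(e, e'). e \<in> E \<and> e' \<in> E \<and> e \<noteq> e'}"
  have "finite E"
    using assms(1) edges by (meson Pow_iff finite_Pow_iff finite_subset subsetI)
  then have "finite P" "card P < card E ^ 2"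
    unfolding P_def using assms(2) by (simp_all add: finite_off_diagonal card_off_diagonal_less)
  have "\<exists>T\<in>Pow S. c * card Q \<le> card {x\<in>Q. separates T x}" if "Q \<subseteq> P" for Q
  proof -
    have "finite Q"
      using that \<open>finite P\<close> by (rule finite_subset)
    moreover have "e \<subseteq> S \<and> e' \<subseteq> S \<and> card e \<le> d \<and> p \<le> card (e' - e)" if "(e, e') \<in> Q" for e e'
      using subsetD[OF \<open>Q \<subseteq> P\<close> that] edges distance by (auto simp: P_def)
    ultimately show ?thesis
      unfolding c_def by (rule exists_pool_separating_fraction[OF assms(1) _ assms(3,4)])
  qed
  from greedy_cover[OF \<open>finite P\<close> less_imp_le[OF \<open>c < 1\<close>] this, of t]
  obtain Ts where Ts: "length Ts = t" "set Ts \<subseteq> Pow S"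
    and unseparated: "card {x\<in>P. \<forall>T\<in>set Ts. \<not> separates T x} \<le> (1 - c) ^ t * card P"
    by blast
  note unseparated
  also have "\<dots> < (1 - c) ^ t * real (card E) ^ 2"
    using \<open>c < 1\<close> \<open>card P < card E ^ 2\<close> by (intro mult_strict_left_mono) auto
  also have "\<dots> \<le> 1"
    using t by (simp add: c_def)
  finally have "{x\<in>P. \<forall>T\<in>set Ts. \<not> separates T x} = {}"
    using \<open>finite P\<close> by simp
  then have "response Ts e \<noteq> response Ts e'" if "e \<in> E" "e' \<in> E" "e \<noteq> e'" for e e'
  proof -
    have "(e, e') \<in> P"
      using that by (simp add: P_def)
    then obtain T where "T \<in> set Ts" "separates T (e, e')"
      using \<open>{x\<in>P. \<forall>T\<in>set Ts. \<not> separates T x} = {}\<close> by blast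
    then show ?thesis
      by (rule response_neq_if_separates)
  qed
  with Ts show ?thesis
    by blast
qed

lemma exists_separating_pools_log_bound:
  fixes E :: "nat set set" and d p :: nat
  assumes "finite S" "2 \<le> card E" "1 \<le> p"
    and edges: "\<And>e. e \<in> E \<Longrightarrow> e \<subseteq> S \<and> card e \<le> d"
    and distance: "\<And>e e'. e \<in> E \<Longrightarrow> e' \<in> E \<Longrightarrow> e \<noteq> e' \<Longrightarrow> p \<le> card (e' - e)"
  shows "\<exists>Ts. (\<forall>T\<in>set Ts. T \<subseteq> S) \<and> real (length Ts) \<le> 17 * (real d / real p) * log 2 (card E) \<and>
    (\<forall>e\<in>E. \<forall>e'\<in>E. e \<noteq> e' \<longrightarrow> response Ts e \<noteq> response Ts e')"
proof -
  have "finite E"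
    using assms(2) card.infinite by fastforce
  then obtain e e' where "e \<in> E" "e' \<in> E" "e \<noteq> e'"
    using assms(2) card_le_Suc0_iff_eq[of E] by auto
  have "p \<le> card (e' - e)"
    using distance \<open>e \<in> E\<close> \<open>e' \<in> E\<close> \<open>e \<noteq> e'\<close> by blast
  moreover have "card (e' - e) \<le> card e'" "card e' \<le> d"
    using edges[OF \<open>e' \<in> E\<close>] assms(1) by (auto intro: card_mono finite_subset)
  ultimately have "p \<le> d" "1 \<le> d"
    using assms(3) by linarith+
  obtain t where t: "(1 - real p / (8 * real d)) ^ t * real (card E) ^ 2 \<le> 1"
    and "real t \<le> 17 * (real d / real p) * log 2 (card E)"
    using exists_test_count[OF assms(3) \<open>p \<le> d\<close>, of "card E"] assms(2) by auto
  moreover have "E \<noteq> {}"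
    using \<open>e \<in> E\<close> by blast
  then obtain Ts where "length Ts = t" "set Ts \<subseteq> Pow S"
    "\<forall>e\<in>E. \<forall>e'\<in>E. e \<noteq> e' \<longrightarrow> response Ts e \<noteq> response Ts e'"
    using exists_separating_pools[OF assms(1) _ \<open>1 \<le> d\<close> \<open>p \<le> d\<close> edges distance t] by blast
  ultimately show ?thesis
    by (intro exI[of _ Ts]) auto
qed

theorem corollary1:
  "\<exists>C::real. C > 0 \<and>
    (\<forall>(d::nat) (n::nat) (E::nat set set) (p::nat).
      1 \<le> d \<and> d \<le> n \<and> E \<noteq> {} \<and> (\<forall>e\<in>E. e \<subseteq> {1..n} \<and> card e \<le> d) \<and>
      1 \<le> p \<and> (\<forall>e\<in>E. \<forall>e'\<in>E. e \<noteq> e' \<longrightarrow> p \<le> card (e' - e))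
      \<longrightarrow> (\<exists>Ts::nat set list. (\<forall>T\<in>set Ts. T \<subseteq> {1..n}) \<and>
             real (length Ts) \<le> C * (real d / real p) * log 2 (real (card E)) \<and>
             (\<forall>e\<in>E. \<forall>e'\<in>E. e \<noteq> e' \<longrightarrow> response Ts e \<noteq> response Ts e')))"
proof (intro exI[of _ 17] conjI allI impI)
  fix d n p :: nat and E :: "nat set set"
  assume "1 \<le> d \<and> d \<le> n \<and> E \<noteq> {} \<and> (\<forall>e\<in>E. e \<subseteq> {1..n} \<and> card e \<le> d) \<and>
      1 \<le> p \<and> (\<forall>e\<in>E. \<forall>e'\<in>E. e \<noteq> e' \<longrightarrow> p \<le> card (e' - e))"
  then have E: "E \<noteq> {}" and edges: "\<And>e. e \<in> E \<Longrightarrow> e \<subseteq> {1..n} \<and> card e \<le> d"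
    and p: "1 \<le> p" and distance: "\<And>e e'. e \<in> E \<Longrightarrow> e' \<in> E \<Longrightarrow> e \<noteq> e' \<Longrightarrow> p \<le> card (e' - e)"
    by auto
  have "finite E"
    using edges by (intro finite_subset[of E "Pow {1..n}"]) auto
  show "\<exists>Ts. (\<forall>T\<in>set Ts. T \<subseteq> {1..n}) \<and>
      real (length Ts) \<le> 17 * (real d / real p) * log 2 (real (card E)) \<and>
      (\<forall>e\<in>E. \<forall>e'\<in>E. e \<noteq> e' \<longrightarrow> response Ts e \<noteq> response Ts e')"
  proof (cases "card E \<le> 1")
    case True
    with \<open>finite E\<close> E show ?thesis
      by (intro exI[of _ "[]"]) (auto simp: card_le_Suc0_iff_eq Suc_le_eq card_gt_0_iff)
  next
    case False
    then show ?thesis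
      using exists_separating_pools_log_bound[of "{1..n}" E p d] p edges distance by auto
  qed
qed simp

end
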